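(* Let $\mathcal{A}$ be a unital commutative C*-algebra and $d,n\in\mathbb{N}$. Let $\{\tau_j\}_{j=1}^n$ and $\{\omega_j\}_{j=1}^n$ be two Parseval frames for the Hilbert C*-module $\mathcal{A}^d$, and let $\varepsilon>0$. If \[ \left\|\sum_{j=1}^{n}\langle \tau_j-\omega_j, \tau_j-\omega_j\rangle \right\|<\varepsilon, \] then \[ \left\|\sum_{j=1}^{n}\langle \theta_\tau\tau_j-\theta_\omega\omega_j, \theta_\tau\tau_j-\theta_\omega \omega_j\rangle \right\|<4\varepsilon, \] where the inner product on the left is that of $\mathcal{A}^n$.
   Context: For a unital C*-algebra $\mathcal{A}$ and $m\in\mathbb{N}$, $\mathcal{A}^m$ is the left $\mathcal{A}$-module with the natural operations and $\mathcal{A}$-valued inner product $\langle (x_j)_{j=1}^m,(y_j)_{j=1}^m\rangle=\sum_{j=1}^m x_jy_j^*$, with norm $\|x\|=\|\langle x,x\rangle\|^{1/2}$; $\{e_k\}$ denotes its standard orthonormal basis. A collection $\{\tau_j\}_{j=1}^n$ in $\mathcal{A}^d$ is a Parseval frame for $\mathcal{A}^d$ if $\langle x,x\rangle=\sum_{j=1}^n\langle x,\tau_j\rangle\langle\tau_j,x\rangle$ for all $x\in\mathcal{A}^d$. Its analysis homomorphism is $\theta_\tau:\mathcal{A}^d\to\mathcal{A}^n$, $\theta_\tau x=(\langle x,\tau_j\rangle)_{j=1}^n$; similarly for $\theta_\omega$. *)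

theory Defs
  imports "HOL-Analysis.Analysis"
begin

class comm_cstar_algebra_1 = real_normed_algebra_1 + banach + comm_ring_1 +
  fixes cscale :: "complex \<Rightarrow> 'a \<Rightarrow> 'a"
    and cstar :: "'a \<Rightarrow> 'a"
  assumes cscale_of_real: "cscale (complex_of_real r) x = scaleR r x"
    and cscale_add_left: "cscale (a + b) x = cscale a x + cscale b x"
    and cscale_add_right: "cscale a (x + y) = cscale a x + cscale a y"
    and cscale_cscale: "cscale a (cscale b x) = cscale (a * b) x"
    and cscale_one: "cscale 1 x = x"
    and cscale_mult_left: "cscale a (x * y) = cscale a x * y"
    and cscale_mult_right: "cscale a (x * y) = x * cscale a y"
    and norm_cscale: "norm (cscale a x) = cmod a * norm x"
    and cstar_add: "cstar (x + y) = cstar x + cstar y"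
    and cstar_cscale: "cstar (cscale a x) = cscale (cnj a) (cstar x)"
    and cstar_mult: "cstar (x * y) = cstar y * cstar x"
    and cstar_cstar: "cstar (cstar x) = x"
    and cstar_identity: "norm (cstar x * x) = (norm x)\<^sup>2"

text \<open>Elements of A^m are represented by functions nat \<Rightarrow> 'a; only indices < m matter.
The A-valued inner product on A^m: <x,y> = sum_{j<m} x_j y_j^*.\<close>

definition hip :: "nat \<Rightarrow> (nat \<Rightarrow> 'a::comm_cstar_algebra_1) \<Rightarrow> (nat \<Rightarrow> 'a) \<Rightarrow> 'a" where
  "hip m x y = (\<Sum>j<m. x j * cstar (y j))"

definition parseval_frame :: "nat \<Rightarrow> nat \<Rightarrow> (nat \<Rightarrow> nat \<Rightarrow> 'a::comm_cstar_algebra_1) \<Rightarrow> bool" where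
  "parseval_frame d n \<tau> \<longleftrightarrow>
     (\<forall>x. hip d x x = (\<Sum>j<n. hip d x (\<tau> j) * hip d (\<tau> j) x))"

definition analysis_op :: "nat \<Rightarrow> (nat \<Rightarrow> nat \<Rightarrow> 'a::comm_cstar_algebra_1) \<Rightarrow> (nat \<Rightarrow> 'a) \<Rightarrow> nat \<Rightarrow> 'a" where
  "analysis_op d \<tau> x = (\<lambda>j. hip d x (\<tau> j))"

end

theory Submission
  imports Defs "HOL-Computational_Algebra.Formal_Power_Series" "HOL-Library.Function_Algebras"
begin

(* Entrywise, \<theta>\<^sub>\<tau>\<tau>\<^sub>j - \<theta>\<^sub>\<omega>\<omega>\<^sub>j = P\<^sub>j + Q\<^sub>j with P\<^sub>j = \<theta>\<^sub>\<tau>(\<tau>\<^sub>j - \<omega>\<^sub>j) and Q\<^sub>j = (<\<omega>\<^sub>j, \<tau>\<^sub>k - \<omega>\<^sub>k>)\<^sub>k.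
   Parseval for \<tau> gives \<Sigma> <P\<^sub>j, P\<^sub>j> = E := \<Sigma> <\<tau>\<^sub>j - \<omega>\<^sub>j, \<tau>\<^sub>j - \<omega>\<^sub>j>, and Parseval for \<omega>,
   read along columns and using commutativity, gives \<Sigma> <Q\<^sub>j, Q\<^sub>j> = E.  By the parallelogram
   law \<Sigma> <P\<^sub>j + Q\<^sub>j, P\<^sub>j + Q\<^sub>j> + \<Sigma> <P\<^sub>j - Q\<^sub>j, P\<^sub>j - Q\<^sub>j> = 4E, and since the norm is
   monotone on positive elements the first sum has norm at most 4\<parallel>E\<parallel>.  Positivity and this
   monotonicity are derived from the C*-identity alone, square roots being supplied by the
   binomial series of \<surd>(1 - u). *)

definition sqrt_coeff :: "nat \<Rightarrow> real" where
  "sqrt_coeff k = ((1/2) gchoose k) * (-1)^k"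

lemma abs_gbinomial_half_le_1: "\<bar>(1/2::real) gchoose k\<bar> \<le> 1"
proof (induction k)
  case (Suc k)
  have "real (Suc k) * ((1/2::real) gchoose Suc k) = (1/2 - real k) * ((1/2) gchoose k)"
    using gbinomial_mult_1[of "1/2::real" k] by (simp add: algebra_simps)
  then have "real (Suc k) * \<bar>(1/2::real) gchoose Suc k\<bar>
      = \<bar>1/2 - real k\<bar> * \<bar>(1/2) gchoose k\<bar>"
    by (metis abs_mult abs_of_nat)
  also have "\<dots> \<le> real (Suc k) * 1"
    by (rule mult_mono) (use Suc.IH in auto)
  finally show ?case by (simp del: of_nat_Suc)
qed simp

lemma sqrt_coeff_convolution:
  "(\<Sum>i\<le>k. sqrt_coeff i * sqrt_coeff (k - i))
    = (if k = 0 then 1 else if k = 1 then -1 else 0)"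
proof -
  have "(\<Sum>i\<le>k. sqrt_coeff i * sqrt_coeff (k - i))
      = (\<Sum>i\<le>k. (-1)^k * (((1/2) gchoose i) * ((1/2) gchoose (k - i))))"
  proof (intro sum.cong refl)
    fix i assume "i \<in> {..k}"
    then have "(-1::real)^k = (-1)^i * (-1)^(k - i)" by (simp add: power_add[symmetric])
    then show "sqrt_coeff i * sqrt_coeff (k - i)
        = (-1)^k * (((1/2) gchoose i) * ((1/2) gchoose (k - i)))"
      by (simp add: sqrt_coeff_def mult_ac)
  qed
  also have "\<dots> = (-1)^k * (1 gchoose k)"
    using gbinomial_Vandermonde[of "1/2::real" "1/2" k]
    by (simp add: atMost_atLeast0 sum_distrib_left[symmetric])
  also have "\<dots> = (if k = 0 then 1 else if k = 1 then -1 else 0)"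
  proof -
    have "(1 gchoose k) = real (1 choose k)" by (simp add: binomial_gbinomial)
    moreover have "1 choose k = 0" if "k > 1" using that by (simp add: binomial_eq_0)
    ultimately show ?thesis by (cases "k > 1") (auto simp: not_less le_Suc_eq)
  qed
  finally show ?thesis .
qed

definition sqrt_one_minus :: "'a::{real_normed_algebra_1,banach} \<Rightarrow> 'a" where
  "sqrt_one_minus u = (\<Sum>k. sqrt_coeff k *\<^sub>R u ^ k)"

lemma summable_norm_sqrt_series:
  fixes u :: "'a::real_normed_algebra_1"
  assumes "norm u < 1"
  shows "summable (\<lambda>k. norm (sqrt_coeff k *\<^sub>R u ^ k))"
proof (rule summable_comparison_test)
  show "\<exists>N. \<forall>k\<ge>N. norm (norm (sqrt_coeff k *\<^sub>R u ^ k)) \<le> norm u ^ k"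
  proof (intro exI allI impI)
    fix k
    have "\<bar>sqrt_coeff k\<bar> * norm (u ^ k) \<le> 1 * norm u ^ k"
      by (rule mult_mono)
        (simp_all add: sqrt_coeff_def abs_mult abs_gbinomial_half_le_1 norm_power_ineq)
    then show "norm (norm (sqrt_coeff k *\<^sub>R u ^ k)) \<le> norm u ^ k" by simp
  qed
  show "summable (\<lambda>k. norm u ^ k)" using assms by (simp add: summable_geometric)
qed

lemma sqrt_one_minus_square:
  fixes u :: "'a::{real_normed_algebra_1,banach}"
  assumes "norm u < 1"
  shows "sqrt_one_minus u * sqrt_one_minus u = 1 - u"
proof -
  let ?f = "\<lambda>k. sqrt_coeff k *\<^sub>R u ^ k"
  let ?g = "\<lambda>k. (if k = 0 then 1 else if k = 1 then -1 else 0) *\<^sub>R u ^ k"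
  have "(\<lambda>k. \<Sum>i\<le>k. ?f i * ?f (k - i)) sums (sqrt_one_minus u * sqrt_one_minus u)"
    unfolding sqrt_one_minus_def
    by (rule Cauchy_product_sums[OF summable_norm_sqrt_series summable_norm_sqrt_series])
      (use assms in simp_all)
  moreover have "(\<Sum>i\<le>k. ?f i * ?f (k - i))
      = (\<Sum>i\<le>k. sqrt_coeff i * sqrt_coeff (k - i)) *\<^sub>R u ^ k" for k
    by (auto simp: scaleR_sum_left power_add[symmetric] intro!: sum.cong)
  ultimately have "?g sums (sqrt_one_minus u * sqrt_one_minus u)"
    by (simp add: sqrt_coeff_convolution)
  moreover have "?g sums (1 - u)"
    using sums_finite[of "{0, 1}" ?g] by simp
  ultimately show ?thesis by (rule sums_unique2)
qed

lemma cstar_one [simp]: "cstar 1 = (1::'a::comm_cstar_algebra_1)"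
  by (metis cstar_cstar cstar_mult mult_1_right)

lemma cstar_zero [simp]: "cstar 0 = (0::'a::comm_cstar_algebra_1)"
  using cstar_add[of 0 0] by simp

lemma cstar_uminus [simp]: "cstar (- x) = - cstar (x::'a::comm_cstar_algebra_1)"
  using cstar_add[of x "- x"] by (simp add: eq_neg_iff_add_eq_0 add.commute)

lemma cstar_diff [simp]: "cstar (x - y) = cstar x - cstar (y::'a::comm_cstar_algebra_1)"
  using cstar_add[of x "- y"] by simp

lemma cstar_scaleR [simp]: "cstar (r *\<^sub>R x) = r *\<^sub>R cstar (x::'a::comm_cstar_algebra_1)"
  by (metis cstar_cscale cscale_of_real complex_cnj_complex_of_real)

lemma cstar_of_real [simp]: "cstar (of_real r) = (of_real r::'a::comm_cstar_algebra_1)"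
  by (simp add: of_real_def del: of_real_1 scaleR_one)

lemma cstar_power [simp]: "cstar (x ^ k) = cstar (x::'a::comm_cstar_algebra_1) ^ k"
  by (induction k) (simp_all add: cstar_mult mult.commute)

lemma cstar_sum: "cstar (sum f S) = (\<Sum>i\<in>S. cstar (f i :: 'a::comm_cstar_algebra_1))"
  by (induction S rule: infinite_finite_induct) (simp_all add: cstar_add)

lemma norm_cstar [simp]: "norm (cstar x) = norm (x::'a::comm_cstar_algebra_1)"
proof -
  have le: "norm y \<le> norm (cstar y)" for y :: 'a
  proof (cases "y = 0")
    case False
    have "norm y * norm y \<le> norm (cstar y) * norm y"
      using cstar_identity[of y] norm_mult_ineq[of "cstar y" y] by (simp add: power2_eq_square)
    then show ?thesis using False by simp
  qed simp
  show ?thesis using le[of x] le[of "cstar x"] by (simp add: cstar_cstar)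
qed

lemma bounded_linear_cstar: "bounded_linear (cstar :: 'a::comm_cstar_algebra_1 \<Rightarrow> 'a)"
  by (rule bounded_linear_intro[where K = 1]) (simp_all add: cstar_add)

lemma cstar_sqrt_one_minus:
  fixes u :: "'a::comm_cstar_algebra_1"
  assumes "cstar u = u" and "norm u < 1"
  shows "cstar (sqrt_one_minus u) = sqrt_one_minus u"
proof -
  have "summable (\<lambda>k. sqrt_coeff k *\<^sub>R u ^ k)"
    by (rule summable_norm_cancel[OF summable_norm_sqrt_series[OF assms(2)]])
  then show ?thesis
    unfolding sqrt_one_minus_def using assms(1)
    by (simp add: bounded_linear.suminf[OF bounded_linear_cstar])
qed

lemma cscale_eq_mult: "cscale a x = cscale a 1 * (x::'a::comm_cstar_algebra_1)"
  by (metis cscale_mult_left mult_1_left)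

lemma cscale_ii_square: "cscale \<i> 1 * cscale \<i> 1 = (-1::'a::comm_cstar_algebra_1)"
proof -
  have "cscale \<i> 1 * cscale \<i> 1 = cscale (\<i> * \<i>) (1::'a)"
    by (metis cscale_cscale cscale_eq_mult)
  also have "\<dots> = cscale (complex_of_real (-1)) 1" by simp
  finally show ?thesis by (simp only: cscale_of_real) simp
qed

lemma cstar_cscale_ii: "cstar (cscale \<i> 1) = - cscale \<i> (1::'a::comm_cstar_algebra_1)"
proof -
  have "cstar (cscale \<i> 1) = cscale (complex_of_real (-1) * \<i>) (1::'a)"
    by (simp add: cstar_cscale)
  also have "\<dots> = - cscale \<i> 1"
    by (simp only: cscale_cscale[symmetric] cscale_of_real) simp
  finally show ?thesis .
qed

lemma norm_le_norm_sum_squares: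
  fixes g w :: "'a::comm_cstar_algebra_1"
  assumes "cstar g = g" and "cstar w = w"
  shows "(norm g)\<^sup>2 \<le> norm (g * g + w * w)"
proof -
  let ?\<iota> = "cscale \<i> (1::'a)"
  define x where "x = g + ?\<iota> * w"
  have cstar_x: "cstar x = g - ?\<iota> * w"
    using assms by (simp add: x_def cstar_add cstar_mult cstar_cscale_ii mult.commute)
  have "cstar x * x = g * g - (?\<iota> * ?\<iota>) * (w * w)"
    unfolding cstar_x by (simp add: x_def algebra_simps)
  then have "(norm x)\<^sup>2 = norm (g * g + w * w)"
    by (simp add: cstar_identity[symmetric] cscale_ii_square)
  moreover have "norm g \<le> norm x"
  proof -
    have "2 *\<^sub>R g = x + cstar x" unfolding cstar_x by (simp add: x_def scaleR_2)
    then have "2 * norm g \<le> norm x + norm (cstar x)"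
      by (metis norm_scaleR norm_triangle_ineq abs_numeral)
    then show ?thesis by simp
  qed
  ultimately show ?thesis by (metis norm_ge_zero power_mono)
qed

(* Self-adjoint with spectrum in [0, 2T] for some T, expressed through the norm so that no
   spectral theory is needed. *)
definition cstar_positive :: "'a::comm_cstar_algebra_1 \<Rightarrow> bool" where
  "cstar_positive h \<longleftrightarrow> cstar h = h \<and> (\<exists>T. norm (of_real T - h) \<le> T)"

lemma cstar_positive_0 [simp]: "cstar_positive (0::'a::comm_cstar_algebra_1)"
  unfolding cstar_positive_def by (auto intro!: exI[of _ 0])

lemma cstar_positive_add:
  fixes h k :: "'a::comm_cstar_algebra_1"
  assumes "cstar_positive h" and "cstar_positive k"
  shows "cstar_positive (h + k)"
proof -
  obtain S T where S: "norm (of_real S - h) \<le> S" and T: "norm (of_real T - k) \<le> T"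
    using assms unfolding cstar_positive_def by blast
  have "norm (of_real (S + T) - (h + k)) \<le> norm (of_real S - h) + norm (of_real T - k)"
    by (metis norm_triangle_ineq of_real_add add_diff_add)
  with S T have "norm (of_real (S + T) - (h + k)) \<le> S + T" by linarith
  then show ?thesis
    using assms unfolding cstar_positive_def by (auto simp: cstar_add simp del: of_real_add)
qed

lemma cstar_positive_sum:
  "(\<And>i. i \<in> I \<Longrightarrow> cstar_positive (f i))
    \<Longrightarrow> cstar_positive (sum f I :: 'a::comm_cstar_algebra_1)"
  by (induction I rule: infinite_finite_induct) (auto intro: cstar_positive_add)

lemma cstar_positive_scaleR:
  fixes h :: "'a::comm_cstar_algebra_1"
  assumes "cstar_positive h" and "r \<ge> 0"
  shows "cstar_positive (r *\<^sub>R h)"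
proof -
  obtain T where T: "norm (of_real T - h) \<le> T"
    using assms(1) unfolding cstar_positive_def by blast
  have "norm (of_real (r * T) - r *\<^sub>R h) = r * norm (of_real T - h)"
    using assms(2)
    by (metis scaleR_diff_right scaleR_conv_of_real of_real_mult norm_scaleR abs_of_nonneg)
  also have "\<dots> \<le> r * T" using T assms(2) by (rule mult_left_mono)
  finally show ?thesis
    using assms(1) unfolding cstar_positive_def by (auto simp del: of_real_mult)
qed

lemma cstar_positive_of_real_minus:
  fixes k :: "'a::comm_cstar_algebra_1"
  assumes "cstar k = k" and "norm k \<le> c"
  shows "cstar_positive (of_real c - k)"
  unfolding cstar_positive_def using assms by (auto intro!: exI[of _ c])

lemma cstar_positive_square:
  fixes a :: "'a::comm_cstar_algebra_1"
  assumes "cstar a = a"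
  shows "cstar_positive (a * a)"
proof -
  define T where "T = (norm a)\<^sup>2 + 1"
  have "T > 0" by (simp add: T_def add_nonneg_pos)
  define g where "g = (1 / sqrt T) *\<^sub>R a"
  define w where "w = sqrt_one_minus (g * g)"
  have self_adjoint_g: "cstar g = g" using assms by (simp add: g_def)
  have gg: "g * g = (1 / T) *\<^sub>R (a * a)"
    using \<open>T > 0\<close> by (simp add: g_def real_sqrt_mult[symmetric])
  have "norm (g * g) \<le> (norm a)\<^sup>2 / T"
    using \<open>T > 0\<close> norm_mult_ineq[of a a]
    by (simp add: gg divide_right_mono power2_eq_square)
  also have "\<dots> < 1" using \<open>T > 0\<close> by (simp add: T_def)
  finally have "norm (g * g) < 1" .
  then have ww: "w * w = 1 - g * g" and self_adjoint_w: "cstar w = w"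
    using self_adjoint_g
    by (simp_all add: w_def sqrt_one_minus_square cstar_sqrt_one_minus cstar_mult)
  have "norm (1 - g * g) \<le> (norm w)\<^sup>2"
    unfolding ww[symmetric] power2_eq_square by (rule norm_mult_ineq)
  also have "\<dots> \<le> 1"
    using norm_le_norm_sum_squares[OF self_adjoint_w self_adjoint_g] by (simp add: ww)
  finally have "norm (1 - g * g) \<le> 1" .
  moreover have "of_real T - a * a = T *\<^sub>R (1 - g * g)"
    using \<open>T > 0\<close> by (simp add: gg scaleR_diff_right of_real_def)
  ultimately have "norm (of_real T - a * a) \<le> T"
    using \<open>T > 0\<close> by (simp add: mult_le_cancel_left1)
  then show ?thesis
    unfolding cstar_positive_def using assms by (auto simp: cstar_mult)
qed

lemma cstar_positive_mult_cstar: "cstar_positive (x * cstar (x::'a::comm_cstar_algebra_1))"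
proof -
  let ?\<iota> = "cscale \<i> (1::'a)"
  define a where "a = x + cstar x"
  define b where "b = ?\<iota> * (x - cstar x)"
  have "cstar a = a" by (simp add: a_def cstar_add cstar_cstar)
  moreover have "cstar b = b"
    by (simp add: b_def cstar_mult cstar_cstar cstar_cscale_ii algebra_simps)
  ultimately have "cstar_positive ((1/4) *\<^sub>R (a * a + b * b))"
    by (intro cstar_positive_scaleR cstar_positive_add cstar_positive_square) simp_all
  moreover have "b * b = (?\<iota> * ?\<iota>) * ((x - cstar x) * (x - cstar x))"
    by (simp add: b_def mult_ac)
  then have "a * a + b * b = 4 *\<^sub>R (x * cstar x)"
    by (simp add: a_def cscale_ii_square algebra_simps scaleR_conv_of_real)
  ultimately show ?thesis by simp
qed

lemma ex_self_adjoint_sqrt: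
  fixes h :: "'a::comm_cstar_algebra_1"
  assumes "cstar_positive h" and "e > 0"
  shows "\<exists>g. cstar g = g \<and> g * g = h + of_real e"
proof -
  obtain T where T: "norm (of_real T - h) \<le> T" and self_adjoint_h: "cstar h = h"
    using assms(1) unfolding cstar_positive_def by blast
  have "T \<ge> 0" using T norm_ge_zero order_trans by blast
  define u where "u = (1 / (T + e)) *\<^sub>R (of_real T - h)"
  define g where "g = sqrt (T + e) *\<^sub>R sqrt_one_minus u"
  have "norm u \<le> T / (T + e)"
    using T \<open>T \<ge> 0\<close> assms(2) by (simp add: u_def divide_right_mono)
  also have "\<dots> < 1" using \<open>T \<ge> 0\<close> assms(2) by simp
  finally have "norm u < 1" .
  moreover have "cstar u = u" by (simp add: u_def self_adjoint_h)
  ultimately have "cstar g = g" and "g * g = (T + e) *\<^sub>R (1 - u)"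
    using \<open>T \<ge> 0\<close> assms(2)
    by (simp_all add: g_def cstar_sqrt_one_minus sqrt_one_minus_square)
  moreover have "(T + e) *\<^sub>R (1 - u) = h + of_real e"
    using \<open>T \<ge> 0\<close> assms(2)
    by (simp add: u_def scaleR_diff_right scaleR_add_left of_real_def)
  ultimately show ?thesis by auto
qed

lemma cstar_positive_norm_le:
  fixes h :: "'a::comm_cstar_algebra_1"
  assumes "cstar_positive h" and "cstar_positive (of_real c - h)" and "c \<ge> 0"
  shows "norm h \<le> c"
proof (rule field_le_epsilon)
  fix e :: real
  assume "e > 0"
  define d where "d = e / 3"
  have "d > 0" using \<open>e > 0\<close> by (simp add: d_def)
  obtain g where self_adjoint_g: "cstar g = g" and gg: "g * g = h + of_real d"
    using ex_self_adjoint_sqrt[OF assms(1) \<open>d > 0\<close>] by blast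
  obtain w where self_adjoint_w: "cstar w = w" and ww: "w * w = of_real c - h + of_real d"
    using ex_self_adjoint_sqrt[OF assms(2) \<open>d > 0\<close>] by blast
  have sum_of_squares: "g * g + w * w = of_real (c + d + d)" by (simp add: gg ww algebra_simps)
  have "norm (h + of_real d) \<le> (norm g)\<^sup>2"
    unfolding gg[symmetric] power2_eq_square by (rule norm_mult_ineq)
  also have "\<dots> \<le> norm (g * g + w * w)"
    by (rule norm_le_norm_sum_squares[OF self_adjoint_g self_adjoint_w])
  also have "\<dots> = c + d + d"
    unfolding sum_of_squares norm_of_real using assms(3) \<open>d > 0\<close> by simp
  finally have "norm (h + of_real d) \<le> c + d + d" .
  moreover have "norm h \<le> norm (h + of_real d) + d"
    using norm_triangle_ineq4[of "h + of_real d" "of_real d"] \<open>d > 0\<close> by simp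
  ultimately show "norm h \<le> c + e" by (simp add: d_def)
qed

lemma norm_le_norm_add_cstar_positive:
  fixes h k :: "'a::comm_cstar_algebra_1"
  assumes "cstar_positive h" and "cstar_positive k"
  shows "norm h \<le> norm (h + k)"
proof (rule cstar_positive_norm_le[OF assms(1)])
  have "cstar (h + k) = h + k" using assms by (simp add: cstar_positive_def cstar_add)
  then have "cstar_positive (of_real (norm (h + k)) - (h + k) + k)"
    by (intro cstar_positive_add cstar_positive_of_real_minus assms(2)) simp_all
  then show "cstar_positive (of_real (norm (h + k)) - h)" by (simp add: algebra_simps)
qed simp

lemma hip_diff_left: "hip m (x - y) z = hip m x z - hip m y z"
  by (simp add: hip_def algebra_simps sum_subtractf)

lemma hip_diff_right: "hip m x (y - z) = hip m x y - hip m x z"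
  by (simp add: hip_def algebra_simps sum_subtractf)

lemma cstar_hip: "cstar (hip m x y) = hip m y x"
  by (simp add: hip_def cstar_sum cstar_mult cstar_cstar mult.commute)

lemma cstar_positive_hip: "cstar_positive (hip m x x)"
  unfolding hip_def by (intro cstar_positive_sum cstar_positive_mult_cstar)

lemma hip_parallelogram:
  "hip m (x + y) (x + y) + hip m (x - y) (x - y) = 2 * (hip m x x + hip m y y)"
  by (simp add: hip_def cstar_add sum_distrib_left sum.distrib[symmetric] algebra_simps)

lemma sum_hip_parallelogram:
  "(\<Sum>j\<in>J. hip m (x j + y j) (x j + y j)) + (\<Sum>j\<in>J. hip m (x j - y j) (x j - y j))
    = 2 * ((\<Sum>j\<in>J. hip m (x j) (x j)) + (\<Sum>j\<in>J. hip m (y j) (y j)))"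
  by (simp only: sum.distrib[symmetric] hip_parallelogram sum_distrib_left)

lemma parseval_frame_hip_analysis_op:
  assumes "parseval_frame d n \<tau>"
  shows "hip n (analysis_op d \<tau> x) (analysis_op d \<tau> x) = hip d x x"
  using assms by (simp add: parseval_frame_def hip_def[of n] analysis_op_def cstar_hip)

lemma parseval_frame_sum_hip_coefficients:
  assumes "parseval_frame d n \<omega>"
  shows "(\<Sum>j<n. hip m (\<lambda>k. hip d (\<omega> j) (x k)) (\<lambda>k. hip d (\<omega> j) (x k)))
    = (\<Sum>k<m. hip d (x k) (x k))"
proof -
  have "(\<Sum>j<n. hip m (\<lambda>k. hip d (\<omega> j) (x k)) (\<lambda>k. hip d (\<omega> j) (x k)))
      = (\<Sum>k<m. \<Sum>j<n. hip d (x k) (\<omega> j) * hip d (\<omega> j) (x k))"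
    unfolding hip_def[of m] cstar_hip by (subst sum.swap) (simp add: mult.commute)
  also have "\<dots> = (\<Sum>k<m. hip d (x k) (x k))"
    using assms by (simp add: parseval_frame_def)
  finally show ?thesis .
qed

theorem mainTheorem1:
  fixes \<tau> \<omega> :: "nat \<Rightarrow> nat \<Rightarrow> 'a::comm_cstar_algebra_1"
    and d n :: nat and \<epsilon> :: real
  assumes "parseval_frame d n \<tau>" and "parseval_frame d n \<omega>" and "\<epsilon> > 0"
    and "norm (\<Sum>j<n. hip d (\<tau> j - \<omega> j) (\<tau> j - \<omega> j)) < \<epsilon>"
  shows "norm (\<Sum>j<n. hip n (analysis_op d \<tau> (\<tau> j) - analysis_op d \<omega> (\<omega> j))
                          (analysis_op d \<tau> (\<tau> j) - analysis_op d \<omega> (\<omega> j))) < 4 * \<epsilon>"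
proof -
  define D where "D j = \<tau> j - \<omega> j" for j
  define P where "P j = analysis_op d \<tau> (D j)" for j
  define Q where "Q j = (\<lambda>k. hip d (\<omega> j) (D k))" for j
  define E where "E = (\<Sum>j<n. hip d (D j) (D j))"
  have decomposition: "analysis_op d \<tau> (\<tau> j) - analysis_op d \<omega> (\<omega> j) = P j + Q j" for j
    by (simp add: fun_eq_iff P_def Q_def D_def analysis_op_def hip_diff_left hip_diff_right)
  have sum_P: "(\<Sum>j<n. hip n (P j) (P j)) = E"
    using parseval_frame_hip_analysis_op[OF assms(1)] by (simp add: P_def E_def)
  have sum_Q: "(\<Sum>j<n. hip n (Q j) (Q j)) = E"
    unfolding Q_def E_def by (rule parseval_frame_sum_hip_coefficients[OF assms(2)])
  have "norm (\<Sum>j<n. hip n (P j + Q j) (P j + Q j))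
      \<le> norm ((\<Sum>j<n. hip n (P j + Q j) (P j + Q j)) + (\<Sum>j<n. hip n (P j - Q j) (P j - Q j)))"
    by (intro norm_le_norm_add_cstar_positive cstar_positive_sum cstar_positive_hip)
  also have "\<dots> = norm (2 * (E + E))"
    unfolding sum_hip_parallelogram sum_P sum_Q ..
  also have "\<dots> \<le> 4 * norm E"
    using norm_mult_ineq[of 2 "E + E"] norm_triangle_ineq[of E E] by simp
  also have "\<dots> < 4 * \<epsilon>"
    using assms(4) by (simp add: E_def D_def)
  finally show ?thesis unfolding decomposition .
qed

end
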